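(* Let $\mathcal{X}$ and $\mathcal{Y}$ be finite sets, let $\mathcal{M}\subseteq\mathcal{X}\times\mathcal{Y}$ be a nonempty set (the actual matches), and let $\hat{\mathcal{M}}_H\subseteq\mathcal{X}\times\mathcal{Y}$ be a fixed set (the matches identified by a holdout batch algorithm, chosen independently of the validation samples). Let $\mathcal{S}_{\mathcal{M}}$ be a sample drawn uniformly at random without replacement from $\mathcal{M}$, and let $\mathcal{S}_{\mathcal{X}}$ be a sample drawn uniformly at random without replacement from $\mathcal{X}$. Let $\hat{\mathcal{M}}\subseteq\mathcal{X}\times\mathcal{Y}$ be a set of identified matches (produced by a "complete" algorithm) which may depend arbitrarily on $\mathcal{S}_{\mathcal{M}}$ and $\mathcal{S}_{\mathcal{X}}$, and define its recall $R=|\hat{\mathcal{M}}\cap\mathcal{M}|/|\mathcal{M}|$. For $x\in\mathcal{X}$ let $m(x)=|\{y\in\mathcal{Y}:(x,y)\in\mathcal{M}\}|$, and let $k_y$ be an upper bound on $m(x)$ over all $x\in\mathcal{X}$. Then for any $\delta_1,\delta_2>0$, with probability at least $1-\delta_1-\delta_2$, $$R\ \ge\ p^-(\mathcal{M},\mathcal{S}_{\mathcal{M}},\mathbf{1}_{\hat{\mathcal{M}}_H},0,1,\delta_1)-\frac{|\hat{\mathcal{M}}_H\setminus\hat{\mathcal{M}}|}{|\mathcal{X}|\,p^-(\mathcal{X},\mathcal{S}_{\mathcal{X}},m,0,k_y,\delta_2)}.$$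
   Context: PAC bound rules: $p^+$ and $p^-$ are functions which, given a finite set $\mathcal{P}$ (population), a subset $\mathcal{S}\subseteq\mathcal{P}$, a function $f:\mathcal{P}\to\mathbb{R}$, reals $a\le b$ and $\delta>0$, return a real number, and satisfy the following: for every finite set $\mathcal{P}$ with $|\mathcal{P}|=n$, every sample size $s$, and every $f$ with $a\le f(x)\le b$ for all $x\in\mathcal{P}$, if $\mathcal{S}$ is a size-$s$ sample drawn uniformly at random without replacement from $\mathcal{P}$ and $\mu=\frac1n\sum_{x\in\mathcal{P}}f(x)$, then $\Pr\{\mu>p^+(\mathcal{P},\mathcal{S},f,a,b,\delta)\}\le\delta$ and $\Pr\{\mu<p^-(\mathcal{P},\mathcal{S},f,a,b,\delta)\}\le\delta$. $\mathbf{1}_{A}$ denotes the indicator function of a set $A$. *)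

theory Defs
  imports "HOL-Probability.Probability"
begin

definition sample_pmf :: "'a set \<Rightarrow> nat \<Rightarrow> 'a set pmf" where
  "sample_pmf P s = pmf_of_set {S. S \<subseteq> P \<and> card S = s}"

definition pop_mean :: "'a set \<Rightarrow> ('a \<Rightarrow> real) \<Rightarrow> real" where
  "pop_mean P f = (\<Sum>x\<in>P. f x) / real (card P)"

text \<open>The lower half of a PAC bound rule: Pr{mu < p^-(P,S,f,a,b,delta)} <= delta.\<close>
definition pac_lower ::
  "('a set \<Rightarrow> 'a set \<Rightarrow> ('a \<Rightarrow> real) \<Rightarrow> real \<Rightarrow> real \<Rightarrow> real \<Rightarrow> real) \<Rightarrow> bool" where
  "pac_lower p \<longleftrightarrow>
     (\<forall>P s f a b \<delta>. finite P \<and> P \<noteq> {} \<and> s \<le> card P \<and> a \<le> b \<and> \<delta> > 0 \<and>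
        (\<forall>x\<in>P. a \<le> f x \<and> f x \<le> b) \<longrightarrow>
        measure_pmf.prob (sample_pmf P s) {S. pop_mean P f < p P S f a b \<delta>} \<le> \<delta>)"

end

theory Submission
  imports Defs
begin

text \<open>Outside an event of probability at most \<open>\<delta>1\<close> the lower PAC bound on the holdout recall
  \<open>|MH \<inter> M| / |M|\<close> holds, and outside an event of probability at most \<open>\<delta>2\<close> the lower PAC bound
  on the mean match count \<open>|M| / |X|\<close> holds, i.e. \<open>d \<le> |M|\<close>. Since the holdout matches missed by
  \<open>Mh\<close> lie in \<open>MH - Mh\<close>, one has \<open>|MH \<inter> M| \<le> |Mh \<inter> M| + |MH - Mh|\<close>; dividing by \<open>|M|\<close> and
  replacing \<open>|M|\<close> by the smaller \<open>d\<close> in the correction term gives the bound for every \<open>Mh\<close>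
  simultaneously, and a union bound finishes the proof.\<close>

lemma pac_lowerD:
  assumes "pac_lower p" "finite P" "P \<noteq> {}" "s \<le> card P" "a \<le> b" "\<delta> > 0"
    and "\<And>x. x \<in> P \<Longrightarrow> a \<le> f x \<and> f x \<le> b"
  shows "measure_pmf.prob (sample_pmf P s) {S. pop_mean P f < p P S f a b \<delta>} \<le> \<delta>"
  using assms unfolding pac_lower_def by blast

lemma prob_pair_pmf_ge_union_bound:
  assumes "measure_pmf.prob p A \<le> \<delta>1" "measure_pmf.prob q B \<le> \<delta>2"
    and "\<And>a b. a \<notin> A \<Longrightarrow> b \<notin> B \<Longrightarrow> (a, b) \<in> G"
  shows "measure_pmf.prob (pair_pmf p q) G \<ge> 1 - \<delta>1 - \<delta>2"
proof -
  let ?pq = "pair_pmf p q"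
  let ?U = "fst -` A \<union> snd -` B"
  have "measure_pmf.prob ?pq (fst -` A) = measure_pmf.prob p A"
    by (metis measure_map_pmf map_fst_pair_pmf)
  moreover have "measure_pmf.prob ?pq (snd -` B) = measure_pmf.prob q B"
    by (metis measure_map_pmf map_snd_pair_pmf)
  moreover have "measure_pmf.prob ?pq ?U \<le>
      measure_pmf.prob ?pq (fst -` A) + measure_pmf.prob ?pq (snd -` B)"
    by (rule measure_Un_le) simp_all
  moreover have "1 - measure_pmf.prob ?pq ?U = measure_pmf.prob ?pq (UNIV - ?U)"
    by (subst measure_pmf.prob_compl[symmetric]) auto
  moreover have "UNIV - ?U \<subseteq> G"
    using assms(3) by fastforce
  then have "measure_pmf.prob ?pq (UNIV - ?U) \<le> measure_pmf.prob ?pq G"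
    by (rule measure_pmf.finite_measure_mono) simp
  ultimately show ?thesis
    using assms(1,2) by linarith
qed

lemma pop_mean_indicator:
  assumes "finite M"
  shows "pop_mean M (indicator A) = real (card (A \<inter> M)) / real (card M)"
proof -
  have "(\<Sum>x\<in>M. indicator A x :: real) = real (\<Sum>x\<in>M. indicator A x :: nat)"
    by (simp add: indicator_def of_nat_sum[symmetric] if_distrib cong: if_cong)
  also have "\<dots> = real (card (A \<inter> M))"
    using sum_indicator_eq_card[OF assms, of A] by (simp add: Int_commute)
  finally show ?thesis
    unfolding pop_mean_def by simp
qed

lemma pop_mean_card_fibres:
  assumes "finite X" "finite Y" "M \<subseteq> X \<times> Y"
  shows "pop_mean X (\<lambda>x. real (card {y \<in> Y. (x, y) \<in> M})) = real (card M) / real (card X)"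
proof -
  have "M = Sigma X (\<lambda>x. {y \<in> Y. (x, y) \<in> M})"
    using assms(3) by auto
  also have "card \<dots> = (\<Sum>x\<in>X. card {y \<in> Y. (x, y) \<in> M})"
    by (rule card_SigmaI) (use assms(1,2) in auto)
  finally have "card M = (\<Sum>x\<in>X. card {y \<in> Y. (x, y) \<in> M})" .
  then show ?thesis
    unfolding pop_mean_def by simp
qed

lemma card_Int_le_card_Int_add_card_Diff:
  assumes "finite A" "finite C"
  shows "card (A \<inter> C) \<le> card (B \<inter> C) + card (A - B)"
proof -
  have "card (A \<inter> C) \<le> card ((B \<inter> C) \<union> (A - B))"
    using assms by (intro card_mono) auto
  also have "\<dots> \<le> card (B \<inter> C) + card (A - B)"
    by (rule card_Un_le)
  finally show ?thesis .
qed

lemma recall_ge_holdout_bound: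
  fixes q d :: real
  assumes "finite M" "M \<noteq> {}" "finite MH"
    and q: "q \<le> real (card (MH \<inter> M)) / real (card M)"
    and d: "d \<le> real (card M)"
    and nondeg: "card (MH - Mh) = 0 \<or> d > 0"
  shows "q - real (card (MH - Mh)) / d \<le> real (card (Mh \<inter> M)) / real (card M)"
proof -
  let ?a = "real (card (MH - Mh))"
  have cM: "real (card M) > 0"
    using assms(1,2) by (simp add: card_gt_0_iff)
  have "real (card (MH \<inter> M)) \<le> real (card (Mh \<inter> M)) + ?a"
    using card_Int_le_card_Int_add_card_Diff[OF assms(3,1), of Mh] by linarith
  then have "q \<le> real (card (Mh \<inter> M)) / real (card M) + ?a / real (card M)"
    using q cM by (simp add: add_divide_distrib[symmetric] divide_right_mono order_trans)
  moreover have "?a / real (card M) \<le> ?a / d"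
    using nondeg d by (cases "card (MH - Mh) = 0") (auto intro: divide_left_mono)
  ultimately show ?thesis
    by linarith
qed

theorem theorem2:
  fixes X :: "'x set" and Y :: "'y set"
    and M MH :: "('x \<times> 'y) set"
    and Mhat :: "('x \<times> 'y) set \<Rightarrow> 'x set \<Rightarrow> ('x \<times> 'y) set"
    and pM :: "('x \<times> 'y) set \<Rightarrow> ('x \<times> 'y) set \<Rightarrow> (('x \<times> 'y) \<Rightarrow> real) \<Rightarrow> real \<Rightarrow> real \<Rightarrow> real \<Rightarrow> real"
    and pX :: "'x set \<Rightarrow> 'x set \<Rightarrow> ('x \<Rightarrow> real) \<Rightarrow> real \<Rightarrow> real \<Rightarrow> real \<Rightarrow> real"
    and sM sX :: nat and ky \<delta>1 \<delta>2 :: real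
  assumes "finite X" and "finite Y"
    and "M \<subseteq> X \<times> Y" and "M \<noteq> {}" and "MH \<subseteq> X \<times> Y"
    and "\<And>SM SX. Mhat SM SX \<subseteq> X \<times> Y"
    and "pac_lower pM" and "pac_lower pX"
    and "sM \<le> card M" and "sX \<le> card X"
    and "\<And>x. x \<in> X \<Longrightarrow> real (card {y \<in> Y. (x, y) \<in> M}) \<le> ky"
    and "\<delta>1 > 0" and "\<delta>2 > 0"
  shows "measure_pmf.prob (pair_pmf (sample_pmf M sM) (sample_pmf X sX))
           {(SM, SX).
              let Mh = Mhat SM SX;
                  R = real (card (Mh \<inter> M)) / real (card M);
                  a = real (card (MH - Mh));
                  d = real (card X) *
                      pX X SX (\<lambda>x. real (card {y \<in> Y. (x, y) \<in> M})) 0 ky \<delta>2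
              in (a = 0 \<or> d > 0) \<longrightarrow>
                 R \<ge> pM M SM (indicator MH) 0 1 \<delta>1 - a / d}
         \<ge> 1 - \<delta>1 - \<delta>2"
proof (rule prob_pair_pmf_ge_union_bound)
  let ?m = "\<lambda>x. real (card {y \<in> Y. (x, y) \<in> M})"
  have fin: "finite M" "finite MH"
    using assms(1-3,5) finite_subset by blast+
  have X: "X \<noteq> {}" "real (card X) > 0"
    using assms(1,3,4) by (auto simp: card_gt_0_iff)
  then have "0 \<le> ky"
    using assms(11) by (meson all_not_in_conv of_nat_0_le_iff order_trans)
  then show "measure_pmf.prob (sample_pmf X sX) {SX. pop_mean X ?m < pX X SX ?m 0 ky \<delta>2} \<le> \<delta>2"
    using assms(1,8,10,11,13) X by (intro pac_lowerD) auto
  show "measure_pmf.prob (sample_pmf M sM)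
      {SM. pop_mean M (indicator MH) < pM M SM (indicator MH) 0 1 \<delta>1} \<le> \<delta>1"
    using assms(4,7,9,12) fin by (intro pac_lowerD) (auto simp: indicator_def)
  fix SM SX
  assume "SM \<notin> {SM. pop_mean M (indicator MH) < pM M SM (indicator MH) 0 1 \<delta>1}"
    and "SX \<notin> {SX. pop_mean X ?m < pX X SX ?m 0 ky \<delta>2}"
  then have bounds: "pM M SM (indicator MH) 0 1 \<delta>1 \<le> real (card (MH \<inter> M)) / real (card M)"
    "real (card X) * pX X SX ?m 0 ky \<delta>2 \<le> real (card M)"
    using pop_mean_indicator[OF fin(1)] pop_mean_card_fibres[OF assms(1-3)] X(2)
    by (auto simp: field_simps)
  show "(SM, SX) \<in> {(SM, SX).
              let Mh = Mhat SM SX;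
                  R = real (card (Mh \<inter> M)) / real (card M);
                  a = real (card (MH - Mh));
                  d = real (card X) * pX X SX ?m 0 ky \<delta>2
              in (a = 0 \<or> d > 0) \<longrightarrow>
                 R \<ge> pM M SM (indicator MH) 0 1 \<delta>1 - a / d}"
    using recall_ge_holdout_bound[OF fin(1) assms(4) fin(2) bounds, of "Mhat SM SX"]
    by (auto simp: Let_def)
qed

end
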